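(* Let $0\le\theta\le\frac{\pi}{2}$. For each positive integer $N$, let $A_N(\theta)$ be the $N\times N$ matrix with entries $\frac{\cos((m-n)\theta)}{m-n}$ for $m\neq n$ and $0$ on the diagonal, and let $B_N(\theta)$ be the $N\times N$ matrix with entries $\frac{\sin((m-n)\theta)}{m-n}$ for $m\neq n$ and $\theta$ on the diagonal ($m,n=1,\dots,N$). Then \begin{enumerate} \item[(1)] $\displaystyle\lim_{N\to\infty} \frac{\operatorname{trace}(A_N(\theta)^2)}{N} = -\left(\frac{\pi^2}{3}+\theta^2-\pi\theta\right)$; \item[(2)] $\displaystyle\lim_{N\to\infty} \frac{\operatorname{trace}(B_N(\theta)^2)}{N} = \pi\theta$. \end{enumerate} *)

theory Defs
  imports "HOL-Analysis.Analysis"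
begin

definition A_entry :: "real \<Rightarrow> nat \<Rightarrow> nat \<Rightarrow> real" where
  "A_entry \<theta> m n = (if m = n then 0
     else cos ((real m - real n) * \<theta>) / (real m - real n))"

definition B_entry :: "real \<Rightarrow> nat \<Rightarrow> nat \<Rightarrow> real" where
  "B_entry \<theta> m n = (if m = n then \<theta>
     else sin ((real m - real n) * \<theta>) / (real m - real n))"

definition trace_sq :: "(nat \<Rightarrow> nat \<Rightarrow> real) \<Rightarrow> nat \<Rightarrow> real" where
  "trace_sq M N = (\<Sum>m\<in>{1..N}. \<Sum>n\<in>{1..N}. M m n * M n m)"

end

theory Submission
  imports Defs
begin

text \<open>
  Both matrices are Toeplitz, with entries f(m - n), so trace (M^2) equals
  N f(0)^2 + 2 sum_{k=1..N} (N - k) f(k) f(-k). Here f(k) f(-k) is -cos^2(k theta)/k^2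
  resp. sin^2(k theta)/k^2, which is O(1/k^2), so after dividing by N only
  f(0)^2 + 2 sum_{k>=1} f(k) f(-k) survives. By the double angle formulas these series reduce
  to the Fourier series sum_{k>=1} cos(kx)/k^2 = pi^2/6 - pi x/2 + x^2/4 on [0, pi],
  taken at x = 2 theta.

  That identity is obtained from Abel means: for 0 <= r < 1 the function
  x |-> sum r^k cos(kx)/k^2 has derivative -sum r^k sin(kx)/k = -Im(-Ln(1 - r e^(ix))),
  an arctangent lying between 0 and (pi - x)/2 and within O(1 - r) of (pi - x)/2 away
  from x = 0. Integrating these bounds and letting r tend to 1 gives the identity.
\<close>

section \<open>The Fourier series of cos(kx)/k^2 via Abel means\<close>

lemma sums_inverse_squares: "(\<lambda>k. 1 / (real k)\<^sup>2) sums (pi\<^sup>2 / 6)"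
  using inverse_squares_sums sums_Suc_iff[of "\<lambda>k. 1 / (real k)\<^sup>2"] by (simp add: add.commute)

(* Abel means of the Clausen-type series Sl_2(x) = sum cos(kx)/k^2 and Sl_1(x) = sum sin(kx)/k;
   the k = 0 terms vanish since x / 0 = 0. *)
definition Sl2 :: "real \<Rightarrow> real \<Rightarrow> real" where
  "Sl2 r x = (\<Sum>k. r ^ k * cos (real k * x) / (real k)\<^sup>2)"

definition Sl1 :: "real \<Rightarrow> real \<Rightarrow> real" where
  "Sl1 r x = (\<Sum>k. r ^ k * sin (real k * x) / real k)"

lemma norm_Sl2_term_le:
  assumes "\<bar>r\<bar> \<le> 1"
  shows "norm (r ^ k * cos (real k * x) / (real k)\<^sup>2) \<le> 1 / (real k)\<^sup>2"
proof -
  have "\<bar>r ^ k * cos (real k * x)\<bar> \<le> 1 * 1"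
    unfolding abs_mult power_abs using assms
    by (intro mult_mono power_le_one abs_cos_le_one) auto
  then show ?thesis by (simp add: divide_right_mono)
qed

lemma norm_Sl1_term_le:
  assumes "\<bar>r\<bar> \<le> 1"
  shows "norm (r ^ k * sin (real k * x) / real k) \<le> \<bar>r\<bar> ^ k"
proof (cases "k = 0")
  case False
  have "\<bar>sin (real k * x)\<bar> \<le> real k"
    using abs_sin_le_one[of "real k * x"] False by linarith
  then have "\<bar>r\<bar> ^ k * \<bar>sin (real k * x)\<bar> \<le> \<bar>r\<bar> ^ k * real k"
    by (intro mult_left_mono) auto
  then show ?thesis using False by (simp add: abs_mult power_abs divide_simps)
qed simp

lemma has_field_derivative_Sl2:
  assumes "\<bar>r\<bar> < 1"
  shows "(Sl2 r has_field_derivative - Sl1 r x) (at x)"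
proof -
  have term_deriv: "((\<lambda>x. r ^ k * cos (real k * x) / (real k)\<^sup>2) has_field_derivative
      - (r ^ k * sin (real k * x) / real k)) (at x within UNIV)" for k x
  proof -
    have "((\<lambda>x. r ^ k * cos (real k * x) / (real k)\<^sup>2) has_field_derivative
        r ^ k * (- sin (real k * x) * real k) / (real k)\<^sup>2) (at x)"
      by (intro DERIV_cdivide DERIV_cmult) (auto intro!: derivative_eq_intros)
    then show ?thesis by (cases "k = 0") (simp_all add: power2_eq_square)
  qed
  have uniform: "uniformly_convergent_on UNIV (\<lambda>n x. \<Sum>k<n. - (r ^ k * sin (real k * x) / real k))"
  proof (rule Weierstrass_m_test'[where M = "\<lambda>k. \<bar>r\<bar> ^ k"])
    show "norm (- (r ^ k * sin (real k * x) / real k)) \<le> \<bar>r\<bar> ^ k" for k x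
      using norm_Sl1_term_le[of r k x] assms by simp
    show "summable (\<lambda>k. \<bar>r\<bar> ^ k)" using assms by simp
  qed
  have summable_at_0: "summable (\<lambda>k. r ^ k * cos (real k * 0) / (real k)\<^sup>2)"
  proof (rule summable_comparison_test')
    show "summable (\<lambda>k. 1 / (real k)\<^sup>2)" using sums_inverse_squares by (rule sums_summable)
    show "norm (r ^ k * cos (real k * 0) / (real k)\<^sup>2) \<le> 1 / (real k)\<^sup>2" for k
      using norm_Sl2_term_le[of r k 0] assms by simp
  qed
  have "(Sl2 r has_field_derivative (\<Sum>k. - (r ^ k * sin (real k * x) / real k))) (at x)"
    unfolding Sl2_def[abs_def]
    by (rule has_field_derivative_series'(2)[OF convex_UNIV term_deriv uniform _ summable_at_0]) auto
  moreover have "summable (\<lambda>k. r ^ k * sin (real k * x) / real k)"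
  proof (rule summable_comparison_test')
    show "summable (\<lambda>k. \<bar>r\<bar> ^ k)" using assms by simp
    show "norm (r ^ k * sin (real k * x) / real k) \<le> \<bar>r\<bar> ^ k" for k
      using norm_Sl1_term_le[of r k x] assms by simp
  qed
  ultimately show ?thesis by (simp add: Sl1_def suminf_minus)
qed

lemma one_minus_mult_cos_pos:
  fixes r x :: real
  assumes "\<bar>r\<bar> < 1"
  shows "0 < 1 - r * cos x"
proof -
  have "r * cos x \<le> \<bar>r\<bar> * \<bar>cos x\<bar>" by (simp add: abs_mult[symmetric])
  also have "\<dots> \<le> \<bar>r\<bar>" using abs_cos_le_one[of x] by (simp add: mult_left_le)
  finally show ?thesis using assms by linarith
qed

lemma Sl1_eq_arctan:
  assumes "\<bar>r\<bar> < 1"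
  shows "Sl1 r x = arctan (r * sin x / (1 - r * cos x))"
proof -
  define w where "w = complex_of_real r * cis x"
  have "norm (- w) < 1" using assms by (simp add: w_def norm_mult)
  then have "(\<lambda>k. - ((- (- w)) ^ k) / of_nat k) sums Ln (1 + - w)" by (rule Ln_series')
  then have "(\<lambda>k. w ^ k / of_nat k) sums - Ln (1 - w)"
    using sums_minus by fastforce
  then have "(\<lambda>k. Im (w ^ k / of_nat k)) sums - Im (Ln (1 - w))"
    using sums_Im by fastforce
  moreover have "(\<lambda>k. Im (w ^ k / of_nat k)) = (\<lambda>k. r ^ k * sin (real k * x) / real k)"
    by (simp add: w_def power_mult_distrib Im_divide_of_nat sin_n_Im_cis_pow_n)
  ultimately have "Sl1 r x = - Im (Ln (1 - w))"
    unfolding Sl1_def by (simp add: sums_iff)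
  moreover have "0 < Re (1 - w)"
    using one_minus_mult_cos_pos[OF assms, of x] by (simp add: w_def)
  then have "Im (Ln (1 - w)) = arctan (Im (1 - w) / Re (1 - w))"
    by (metis Arg_eq_Im_Ln arg_conv_arctan less_irrefl zero_complex.simps(1))
  ultimately show ?thesis by (simp add: w_def arctan_minus)
qed

lemma arctan_sin_div_one_minus_cos:
  assumes "0 < t" "t \<le> pi"
  shows "arctan (sin t / (1 - cos t)) = (pi - t) / 2"
proof -
  define u where "u = t / 2"
  have u: "0 < u" "u \<le> pi / 2" using assms by (auto simp: u_def)
  have "sin u > 0" using u by (intro sin_gt_zero) auto
  moreover have "sin t = 2 * sin u * cos u" "1 - cos t = 2 * sin u * sin u"
    using sin_double[of u] cos_double_sin[of u] by (simp_all add: u_def power2_eq_square)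
  ultimately have "sin t / (1 - cos t) = tan (pi / 2 - u)"
    by (simp add: tan_cot' cot_def)
  then show ?thesis using u by (simp add: arctan_tan u_def)
qed

lemma arctan_diff_le:
  assumes "a \<le> b"
  shows "arctan b - arctan a \<le> b - a"
proof -
  have "arctan b - b \<le> arctan a - a"
  proof (rule DERIV_nonpos_imp_nonincreasing[OF assms])
    show "\<exists>y. ((\<lambda>x. arctan x - x) has_real_derivative y) (at x) \<and> y \<le> 0" for x
      using DERIV_diff[OF DERIV_arctan DERIV_ident, of x]
      by (intro exI conjI) (auto simp: inverse_le_1_iff)
  qed
  then show ?thesis by simp
qed

lemma sin_div_one_minus_cos_diff:
  fixes r t :: real
  assumes "\<bar>r\<bar> < 1" "cos t < 1"
  shows "sin t / (1 - cos t) - r * sin t / (1 - r * cos t)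
    = (1 - r) * sin t / ((1 - cos t) * (1 - r * cos t))"
  using one_minus_mult_cos_pos[OF assms(1), of t] assms(2) by (simp add: field_simps)

lemma Sl1_nonneg:
  assumes "0 \<le> r" "r < 1" "0 \<le> t" "t \<le> pi"
  shows "0 \<le> Sl1 r t"
  using one_minus_mult_cos_pos[of r t] sin_ge_zero[of t] assms by (simp add: Sl1_eq_arctan)

lemma Sl1_le:
  assumes "0 \<le> r" "r < 1" "0 \<le> t" "t \<le> pi"
  shows "Sl1 r t \<le> (pi - t) / 2"
proof (cases "t = 0")
  case False
  then have t: "0 < t" using assms by simp
  then have "cos t < 1" using assms cos_monotone_0_pi[of 0 t] by simp
  then have "0 \<le> sin t / (1 - cos t) - r * sin t / (1 - r * cos t)"
    using sin_div_one_minus_cos_diff[of r t] one_minus_mult_cos_pos[of r t] sin_ge_zero[of t] assms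
    by simp
  then have "Sl1 r t \<le> arctan (sin t / (1 - cos t))"
    using assms by (simp add: Sl1_eq_arctan arctan_le_iff)
  then show ?thesis using arctan_sin_div_one_minus_cos[OF t assms(4)] by simp
qed (use assms in \<open>simp add: Sl1_eq_arctan\<close>)

lemma one_minus_cos_le_one_minus_mult_cos:
  assumes r: "0 \<le> r" "r \<le> 1" and t: "\<delta> \<le> t" "t \<le> pi" and \<delta>: "0 \<le> \<delta>" "\<delta> \<le> pi / 2"
  shows "1 - cos \<delta> \<le> 1 - r * cos t"
proof (cases "0 \<le> cos t")
  case True
  then have "r * cos t \<le> cos t" using r by (simp add: mult_left_le_one_le)
  moreover have "cos t \<le> cos \<delta>" using t \<delta> by (intro cos_monotone_0_pi_le) auto
  ultimately show ?thesis by linarith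
next
  case False
  then have "r * cos t \<le> 0" using r by (simp add: mult_nonneg_nonpos)
  moreover have "0 \<le> cos \<delta>" using \<delta> by (intro cos_ge_zero) auto
  ultimately show ?thesis by linarith
qed

lemma Sl1_ge:
  assumes r: "0 \<le> r" "r < 1" and t: "\<delta> \<le> t" "t \<le> pi" and \<delta>: "0 < \<delta>" "\<delta> \<le> pi / 2"
  shows "(pi - t) / 2 - (1 - r) / (1 - cos \<delta>)\<^sup>2 \<le> Sl1 r t"
proof -
  have t0: "0 < t" using t \<delta> by simp
  have cos_\<delta>: "cos \<delta> < 1" using \<delta> cos_monotone_0_pi[of 0 \<delta>] by simp
  have denoms: "1 - cos \<delta> \<le> 1 - cos t" "1 - cos \<delta> \<le> 1 - r * cos t"
    using one_minus_cos_le_one_minus_mult_cos[of 1 \<delta> t] one_minus_cos_le_one_minus_mult_cos[of r \<delta> t]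
      r t \<delta> by auto
  then have "(1 - cos \<delta>) * (1 - cos \<delta>) \<le> (1 - cos t) * (1 - r * cos t)"
    using cos_\<delta> by (intro mult_mono) auto
  moreover have "(1 - r) * sin t \<le> 1 - r"
    using r sin_le_one[of t] by (simp add: mult_left_le)
  ultimately have diff_le:
    "(1 - r) * sin t / ((1 - cos t) * (1 - r * cos t)) \<le> (1 - r) / (1 - cos \<delta>)\<^sup>2"
    using r cos_\<delta> by (simp add: power2_eq_square frac_le)
  have diff_nonneg: "0 \<le> (1 - r) * sin t / ((1 - cos t) * (1 - r * cos t))"
    using r t sin_ge_zero[of t] t0 denoms cos_\<delta> by simp
  have "cos t < 1" using denoms cos_\<delta> by simp
  note diff = sin_div_one_minus_cos_diff[of r t, OF _ this]
  have "arctan (sin t / (1 - cos t)) - Sl1 r t \<le> (1 - r) / (1 - cos \<delta>)\<^sup>2"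
    using arctan_diff_le[of "r * sin t / (1 - r * cos t)" "sin t / (1 - cos t)"]
      diff diff_le diff_nonneg r by (simp add: Sl1_eq_arctan)
  then show ?thesis using arctan_sin_div_one_minus_cos[OF t0 t(2)] by simp
qed

lemma DERIV_le_imp_increment_le:
  fixes f :: "real \<Rightarrow> real"
  assumes "a \<le> b"
    and "\<And>t. a \<le> t \<Longrightarrow> t \<le> b \<Longrightarrow> (f has_real_derivative f' t) (at t)"
    and "\<And>t. a \<le> t \<Longrightarrow> t \<le> b \<Longrightarrow> f' t \<le> M"
  shows "f b - f a \<le> M * (b - a)"
proof -
  have "f b - M * b \<le> f a - M * a"
  proof (rule DERIV_nonpos_imp_nonincreasing[OF assms(1)])
    fix t assume "a \<le> t" "t \<le> b"
    then have "((\<lambda>t. f t - M * t) has_real_derivative f' t - M * 1) (at t)"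
      by (intro DERIV_diff assms(2) DERIV_cmult DERIV_ident)
    with assms(3)[OF \<open>a \<le> t\<close> \<open>t \<le> b\<close>]
    show "\<exists>y. ((\<lambda>t. f t - M * t) has_real_derivative y) (at t) \<and> y \<le> 0" by auto
  qed
  then show ?thesis by (simp add: algebra_simps)
qed

lemma has_field_derivative_Sl2_plus_parabola:
  assumes "\<bar>r\<bar> < 1"
  shows "((\<lambda>x. Sl2 r x + pi * x / 2 - x\<^sup>2 / 4) has_field_derivative (pi - x) / 2 - Sl1 r x) (at x)"
proof -
  have "((\<lambda>x. x ^ 2) has_field_derivative real 2 * x ^ (2 - Suc 0)) (at x)"
    by (rule DERIV_pow)
  then have "((\<lambda>x. Sl2 r x + pi * x / 2 - x\<^sup>2 / 4) has_field_derivative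
      - Sl1 r x + pi * 1 / 2 - real 2 * x ^ (2 - Suc 0) / 4) (at x)"
    by (intro DERIV_diff DERIV_add has_field_derivative_Sl2 assms DERIV_cdivide DERIV_cmult
        DERIV_ident)
  moreover have "- Sl1 r x + pi * 1 / 2 - real 2 * x ^ (2 - Suc 0) / 4 = (pi - x) / 2 - Sl1 r x"
    by (simp add: field_simps)
  ultimately show ?thesis by (simp only:)
qed

lemma Sl2_lower_bound:
  assumes "0 \<le> r" "r < 1" "0 \<le> x" "x \<le> pi"
  shows "Sl2 r 0 - pi * x / 2 + x\<^sup>2 / 4 \<le> Sl2 r x"
proof -
  have "Sl2 r 0 + pi * 0 / 2 - 0\<^sup>2 / 4 \<le> Sl2 r x + pi * x / 2 - x\<^sup>2 / 4"
  proof (rule DERIV_nonneg_imp_nondecreasing[OF assms(3)])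
    fix t assume "0 \<le> t" "t \<le> x"
    then show "\<exists>y. ((\<lambda>x. Sl2 r x + pi * x / 2 - x\<^sup>2 / 4) has_real_derivative y) (at t) \<and> 0 \<le> y"
      using has_field_derivative_Sl2_plus_parabola[of r t] Sl1_le[of r t] assms by auto
  qed
  then show ?thesis by simp
qed

lemma Sl2_upper_bound:
  assumes r: "0 \<le> r" "r < 1" and x: "0 \<le> x" "x \<le> pi" and \<delta>: "0 < \<delta>" "\<delta> \<le> pi / 2"
  shows "Sl2 r x \<le> Sl2 r 0 - pi * x / 2 + x\<^sup>2 / 4 + pi * \<delta> / 2 + pi * ((1 - r) / (1 - cos \<delta>)\<^sup>2)"
proof -
  define g where "g x = Sl2 r x + pi * x / 2 - x\<^sup>2 / 4" for x
  define K where "K = (1 - r) / (1 - cos \<delta>)\<^sup>2"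
  have g': "(g has_real_derivative (pi - t) / 2 - Sl1 r t) (at t)" for t
    unfolding g_def[abs_def] using r by (intro has_field_derivative_Sl2_plus_parabola) simp
  have near_0: "g y - g 0 \<le> pi / 2 * (y - 0)" if "0 \<le> y" "y \<le> pi" for y
  proof (rule DERIV_le_imp_increment_le[OF that(1) g'])
    fix t assume "0 \<le> t" "t \<le> y"
    then have "0 \<le> Sl1 r t" using r that by (intro Sl1_nonneg) auto
    then show "(pi - t) / 2 - Sl1 r t \<le> pi / 2" using \<open>0 \<le> t\<close> by (simp add: field_simps)
  qed
  have "0 \<le> K" using r by (simp add: K_def)
  then have "0 \<le> pi * K" by simp
  have "g x \<le> g 0 + pi * \<delta> / 2 + pi * K"
  proof (cases "x \<le> \<delta>")
    case True
    then have "pi / 2 * (x - 0) \<le> pi * \<delta> / 2" by simp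
    then show ?thesis using near_0[OF x] \<open>0 \<le> pi * K\<close> by linarith
  next
    case False
    have "g x - g \<delta> \<le> K * (x - \<delta>)"
    proof (rule DERIV_le_imp_increment_le[OF _ g'])
      show "\<delta> \<le> x" using False by simp
      fix t assume "\<delta> \<le> t" "t \<le> x"
      then have "(pi - t) / 2 - K \<le> Sl1 r t"
        unfolding K_def using x by (intro Sl1_ge r \<delta>) auto
      then show "(pi - t) / 2 - Sl1 r t \<le> K" by simp
    qed
    moreover have "K * (x - \<delta>) \<le> K * pi" using \<open>0 \<le> K\<close> x \<delta> by (intro mult_left_mono) auto
    moreover have "g \<delta> - g 0 \<le> pi / 2 * (\<delta> - 0)" using near_0[of \<delta>] \<delta> by simp
    ultimately show ?thesis by (simp add: algebra_simps)
  qed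
  then show ?thesis by (simp add: g_def K_def algebra_simps)
qed

lemma continuous_on_Sl2: "continuous_on {-1..1} (\<lambda>r. Sl2 r x)"
proof -
  have "uniform_limit {-1..1} (\<lambda>n r. \<Sum>k<n. r ^ k * cos (real k * x) / (real k)\<^sup>2)
      (\<lambda>r. Sl2 r x) sequentially"
    unfolding Sl2_def
  proof (rule Weierstrass_m_test)
    show "norm (r ^ k * cos (real k * x) / (real k)\<^sup>2) \<le> 1 / (real k)\<^sup>2" if "r \<in> {-1..1}" for k r
      using that by (intro norm_Sl2_term_le) auto
    show "summable (\<lambda>k. 1 / (real k)\<^sup>2)" using sums_inverse_squares by (rule sums_summable)
  qed
  then show ?thesis
    by (rule uniform_limit_theorem[rotated])
      (auto intro!: always_eventually continuous_intros simp: divide_inverse)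
qed

lemma Sl2_one:
  assumes x: "0 \<le> x" "x \<le> pi"
  shows "Sl2 1 x = pi\<^sup>2 / 6 - pi * x / 2 + x\<^sup>2 / 4"
proof -
  define D where "D r = Sl2 r x + pi * x / 2 - x\<^sup>2 / 4 - Sl2 r 0" for r
  define r where "r n = real n / real (Suc n)" for n
  have r: "0 \<le> r n" "r n < 1" for n by (simp_all add: r_def)
  have r_lim: "r \<longlonglongrightarrow> 1" unfolding r_def by (rule LIMSEQ_n_over_Suc_n)
  have "r n \<in> {-1..1}" for n using r[of n] by simp
  then have "(\<lambda>n. Sl2 (r n) y) \<longlonglongrightarrow> Sl2 1 y" for y
    by (intro continuous_on_tendsto_compose[OF continuous_on_Sl2 r_lim] always_eventually) auto
  then have D_lim: "(\<lambda>n. D (r n)) \<longlonglongrightarrow> D 1"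
    unfolding D_def by (intro tendsto_intros)
  have "0 \<le> D (r n)" for n
    using Sl2_lower_bound[OF r x, of n] unfolding D_def by linarith
  then have "0 \<le> D 1"
    by (intro LIMSEQ_le_const[OF D_lim]) auto
  moreover have D_le: "D 1 \<le> pi * \<delta> / 2" if \<delta>: "0 < \<delta>" "\<delta> \<le> pi / 2" for \<delta>
  proof -
    have "cos \<delta> < 1" using \<delta> cos_monotone_0_pi[of 0 \<delta>] by simp
    then have "(\<lambda>n. pi * \<delta> / 2 + pi * ((1 - r n) / (1 - cos \<delta>)\<^sup>2))
        \<longlonglongrightarrow> pi * \<delta> / 2 + pi * ((1 - 1) / (1 - cos \<delta>)\<^sup>2)"
      using r_lim by (intro tendsto_intros) auto
    moreover have "D (r n) \<le> pi * \<delta> / 2 + pi * ((1 - r n) / (1 - cos \<delta>)\<^sup>2)" for n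
      using Sl2_upper_bound[OF r x \<delta>, of n] unfolding D_def by linarith
    ultimately show ?thesis
      by (intro LIMSEQ_le[OF D_lim]) auto
  qed
  moreover have "D 1 \<le> 0"
  proof (rule field_le_epsilon)
    fix e :: real assume "0 < e"
    then have "D 1 \<le> pi * min (pi / 2) (e / 4) / 2"
      by (intro D_le) auto
    also have "\<dots> \<le> 4 * (e / 4) / 2"
      using \<open>0 < e\<close> pi_less_4 by (intro divide_right_mono mult_mono) auto
    finally show "D 1 \<le> 0 + e" using \<open>0 < e\<close> by simp
  qed
  moreover have "Sl2 1 0 = pi\<^sup>2 / 6"
    using sums_inverse_squares by (simp add: Sl2_def sums_iff)
  ultimately show ?thesis by (simp add: D_def)
qed

lemma cos_over_square_sums:
  assumes "0 \<le> x" "x \<le> pi"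
  shows "(\<lambda>k. cos (real k * x) / (real k)\<^sup>2) sums (pi\<^sup>2 / 6 - pi * x / 2 + x\<^sup>2 / 4)"
proof -
  have "summable (\<lambda>k. cos (real k * x) / (real k)\<^sup>2)"
  proof (rule summable_comparison_test')
    show "summable (\<lambda>k. 1 / (real k)\<^sup>2)" using sums_inverse_squares by (rule sums_summable)
    show "norm (cos (real k * x) / (real k)\<^sup>2) \<le> 1 / (real k)\<^sup>2" for k
      using norm_Sl2_term_le[of 1 k x] by simp
  qed
  then show ?thesis using Sl2_one[OF assms] by (simp add: Sl2_def sums_iff)
qed

lemma cos_sq_over_square_sums:
  assumes "0 \<le> \<theta>" "\<theta> \<le> pi / 2"
  shows "(\<lambda>k. (cos (real (Suc k) * \<theta>))\<^sup>2 / (real (Suc k))\<^sup>2)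
    sums (pi\<^sup>2 / 6 - pi * \<theta> / 2 + \<theta>\<^sup>2 / 2)"
proof -
  have "(\<lambda>k. (1 / (real k)\<^sup>2 + cos (real k * (2 * \<theta>)) / (real k)\<^sup>2) / 2)
      sums ((pi\<^sup>2 / 6 + (pi\<^sup>2 / 6 - pi * (2 * \<theta>) / 2 + (2 * \<theta>)\<^sup>2 / 4)) / 2)"
    using assms by (intro sums_divide sums_add sums_inverse_squares cos_over_square_sums) auto
  moreover have "(1 / (real k)\<^sup>2 + cos (real k * (2 * \<theta>)) / (real k)\<^sup>2) / 2
      = (cos (real k * \<theta>))\<^sup>2 / (real k)\<^sup>2" for k
  proof -
    have "(1 + cos (real k * (2 * \<theta>))) / 2 = (cos (real k * \<theta>))\<^sup>2"
      using cos_double_cos[of "real k * \<theta>"] by (simp add: mult.left_commute)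
    moreover have "(1 / (real k)\<^sup>2 + cos (real k * (2 * \<theta>)) / (real k)\<^sup>2) / 2
        = ((1 + cos (real k * (2 * \<theta>))) / 2) / (real k)\<^sup>2"
      by (simp add: add_divide_distrib)
    ultimately show ?thesis by simp
  qed
  moreover have "(pi\<^sup>2 / 6 + (pi\<^sup>2 / 6 - pi * (2 * \<theta>) / 2 + (2 * \<theta>)\<^sup>2 / 4)) / 2
      = pi\<^sup>2 / 6 - pi * \<theta> / 2 + \<theta>\<^sup>2 / 2"
    by (simp add: power2_eq_square field_simps)
  ultimately have "(\<lambda>k. (cos (real k * \<theta>))\<^sup>2 / (real k)\<^sup>2) sums (pi\<^sup>2 / 6 - pi * \<theta> / 2 + \<theta>\<^sup>2 / 2)"
    by (simp only:)
  then show ?thesis by (subst sums_Suc_iff) simp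
qed

lemma sin_sq_over_square_sums:
  assumes "0 \<le> \<theta>" "\<theta> \<le> pi / 2"
  shows "(\<lambda>k. (sin (real (Suc k) * \<theta>))\<^sup>2 / (real (Suc k))\<^sup>2) sums (pi * \<theta> / 2 - \<theta>\<^sup>2 / 2)"
proof -
  have "(\<lambda>k. (1 / (real k)\<^sup>2 - cos (real k * (2 * \<theta>)) / (real k)\<^sup>2) / 2)
      sums ((pi\<^sup>2 / 6 - (pi\<^sup>2 / 6 - pi * (2 * \<theta>) / 2 + (2 * \<theta>)\<^sup>2 / 4)) / 2)"
    using assms by (intro sums_divide sums_diff sums_inverse_squares cos_over_square_sums) auto
  moreover have "(1 / (real k)\<^sup>2 - cos (real k * (2 * \<theta>)) / (real k)\<^sup>2) / 2
      = (sin (real k * \<theta>))\<^sup>2 / (real k)\<^sup>2" for k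
  proof -
    have "(1 - cos (real k * (2 * \<theta>))) / 2 = (sin (real k * \<theta>))\<^sup>2"
      using cos_double_sin[of "real k * \<theta>"] by (simp add: mult.left_commute)
    moreover have "(1 / (real k)\<^sup>2 - cos (real k * (2 * \<theta>)) / (real k)\<^sup>2) / 2
        = ((1 - cos (real k * (2 * \<theta>))) / 2) / (real k)\<^sup>2"
      by (simp add: diff_divide_distrib)
    ultimately show ?thesis by simp
  qed
  moreover have "(pi\<^sup>2 / 6 - (pi\<^sup>2 / 6 - pi * (2 * \<theta>) / 2 + (2 * \<theta>)\<^sup>2 / 4)) / 2
      = pi * \<theta> / 2 - \<theta>\<^sup>2 / 2"
    by (simp add: power2_eq_square field_simps)
  ultimately have "(\<lambda>k. (sin (real k * \<theta>))\<^sup>2 / (real k)\<^sup>2) sums (pi * \<theta> / 2 - \<theta>\<^sup>2 / 2)"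
    by (simp only:)
  then show ?thesis by (subst sums_Suc_iff) simp
qed

section \<open>Traces of squared Toeplitz matrices\<close>

lemma sum_sum_even_diff:
  fixes g :: "real \<Rightarrow> real"
  assumes even: "\<And>t. g (- t) = g t"
  shows "(\<Sum>m=1..N. \<Sum>n=1..N. g (real m - real n))
    = real N * g 0 + 2 * (\<Sum>k=1..N. (real N - real k) * g (real k))"
proof (induction N)
  case (Suc N)
  have reflect: "(\<Sum>n=1..N. g (real (Suc N) - real n)) = (\<Sum>k=1..N. g (real k))"
    by (subst sum.atLeastAtMost_rev) (auto intro!: sum.cong simp: of_nat_diff)
  have "g (real m - real (Suc N)) = g (real (Suc N) - real m)" for m
    using even[of "real (Suc N) - real m"] by simp
  then have "(\<Sum>m=1..Suc N. g (real m - real (Suc N))) = (\<Sum>m=1..N. g (real (Suc N) - real m)) + g 0"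
    by simp
  moreover have "(\<Sum>m=1..Suc N. \<Sum>n=1..Suc N. g (real m - real n))
      = (\<Sum>m=1..N. \<Sum>n=1..N. g (real m - real n)) + (\<Sum>m=1..N. g (real (Suc N) - real m))
        + (\<Sum>m=1..Suc N. g (real m - real (Suc N)))"
    by (simp add: sum.distrib)
  moreover have "(\<Sum>k=1..Suc N. (real (Suc N) - real k) * g (real k))
      = (\<Sum>k=1..N. (real N - real k) * g (real k)) + (\<Sum>k=1..N. g (real k))"
    by (simp add: sum.distrib[symmetric] algebra_simps)
  ultimately show ?case using Suc.IH reflect by (simp add: algebra_simps)
qed simp

lemma trace_sq_Toeplitz:
  "trace_sq (\<lambda>m n. f (real m - real n)) N
    = real N * (f 0)\<^sup>2 + 2 * (\<Sum>k=1..N. (real N - real k) * (f (real k) * f (- real k)))"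
proof -
  have "trace_sq (\<lambda>m n. f (real m - real n)) N
      = (\<Sum>m=1..N. \<Sum>n=1..N. (\<lambda>t. f t * f (- t)) (real m - real n))"
    by (simp add: trace_sq_def)
  also have "\<dots> = real N * (f 0)\<^sup>2 + 2 * (\<Sum>k=1..N. (real N - real k) * (f (real k) * f (- real k)))"
    by (subst sum_sum_even_diff) (simp_all add: power2_eq_square)
  finally show ?thesis .
qed

lemma tendsto_harm_over_n: "(\<lambda>n. harm n / real n) \<longlonglongrightarrow> 0"
proof -
  have "(\<lambda>n. (harm n - ln (real n)) * (1 / real n) + ln (real n) / real n)
      \<longlonglongrightarrow> euler_mascheroni * 0 + 0"
    by (intro tendsto_intros euler_mascheroni_LIMSEQ lim_inverse_n' lim_ln_over_n)
  moreover have "(harm n - ln (real n)) * (1 / real n) + ln (real n) / real n = harm n / real n" for n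
    by (simp add: diff_divide_distrib)
  ultimately show ?thesis by simp
qed

lemma weighted_mean_tendsto_of_square_decay:
  fixes h :: "nat \<Rightarrow> real"
  assumes sums: "(\<lambda>k. h (Suc k)) sums s"
    and decay: "\<And>k. 1 \<le> k \<Longrightarrow> \<bar>h k\<bar> \<le> c / (real k)\<^sup>2"
  shows "(\<lambda>N. (\<Sum>k=1..N. (real N - real k) * h k) / real N) \<longlonglongrightarrow> s"
proof -
  (* The mean is sum_{k=1..N} h k minus (sum_{k=1..N} k h k) / N, and the latter is O(c log N / N). *)
  have partial: "(\<lambda>N. \<Sum>k=1..N. h k) \<longlonglongrightarrow> s"
    using sums by (simp add: sums_def sum.atLeast1_atMost_eq)
  have first_moment: "(\<lambda>N. (\<Sum>k=1..N. real k * h k) / real N) \<longlonglongrightarrow> 0"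
  proof (rule Lim_null_comparison)
    have "\<bar>\<Sum>k=1..N. real k * h k\<bar> \<le> c * harm N" for N
    proof -
      have "\<bar>\<Sum>k=1..N. real k * h k\<bar> \<le> (\<Sum>k=1..N. c * inverse (real k))"
      proof (rule order_trans[OF sum_abs sum_mono])
        fix k assume k: "k \<in> {1..N}"
        then have "real k * \<bar>h k\<bar> \<le> real k * (c / (real k)\<^sup>2)"
          using decay by (intro mult_left_mono) auto
        then show "\<bar>real k * h k\<bar> \<le> c * inverse (real k)"
          using k by (simp add: abs_mult power2_eq_square field_simps)
      qed
      then show ?thesis by (simp add: harm_def sum_distrib_left)
    qed
    then show "\<forall>\<^sub>F N in sequentially. norm ((\<Sum>k=1..N. real k * h k) / real N) \<le> c * (harm N / real N)"
      by (intro always_eventually allI) (simp add: divide_right_mono)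
    show "(\<lambda>N. c * (harm N / real N)) \<longlonglongrightarrow> 0"
      using tendsto_mult_right_zero[OF tendsto_harm_over_n] by simp
  qed
  have "(\<lambda>N. (\<Sum>k=1..N. h k) - (\<Sum>k=1..N. real k * h k) / real N) \<longlonglongrightarrow> s - 0"
    by (intro tendsto_diff partial first_moment)
  moreover have "\<forall>\<^sub>F N in sequentially. (\<Sum>k=1..N. h k) - (\<Sum>k=1..N. real k * h k) / real N
      = (\<Sum>k=1..N. (real N - real k) * h k) / real N"
    by (intro eventually_sequentiallyI[of 1])
      (simp add: field_simps sum_distrib_left sum_subtractf[symmetric] left_diff_distrib)
  ultimately show ?thesis
    by (simp add: Lim_transform_eventually)
qed

lemma trace_sq_A_entry:
  "trace_sq (A_entry \<theta>) N
    = - 2 * (\<Sum>k=1..N. (real N - real k) * ((cos (real k * \<theta>))\<^sup>2 / (real k)\<^sup>2))"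
proof -
  (* f 0 = cos 0 / 0 = 0 reproduces the zero diagonal. *)
  define f where "f t = cos (t * \<theta>) / t" for t
  have "A_entry \<theta> = (\<lambda>m n. f (real m - real n))"
    by (auto simp: A_entry_def f_def fun_eq_iff)
  then have "trace_sq (A_entry \<theta>) N
      = real N * (f 0)\<^sup>2 + 2 * (\<Sum>k=1..N. (real N - real k) * (f (real k) * f (- real k)))"
    by (simp only: trace_sq_Toeplitz)
  moreover have "f (real k) * f (- real k) = - ((cos (real k * \<theta>))\<^sup>2 / (real k)\<^sup>2)" for k
    by (simp add: f_def power2_eq_square)
  moreover have "f 0 = 0" by (simp add: f_def)
  ultimately show ?thesis by (simp add: sum_negf)
qed

lemma trace_sq_B_entry:
  "trace_sq (B_entry \<theta>) N
    = real N * \<theta>\<^sup>2 + 2 * (\<Sum>k=1..N. (real N - real k) * ((sin (real k * \<theta>))\<^sup>2 / (real k)\<^sup>2))"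
proof -
  define f where "f t = (if t = 0 then \<theta> else sin (t * \<theta>) / t)" for t
  have "B_entry \<theta> = (\<lambda>m n. f (real m - real n))"
    by (auto simp: B_entry_def f_def fun_eq_iff)
  then have "trace_sq (B_entry \<theta>) N
      = real N * (f 0)\<^sup>2 + 2 * (\<Sum>k=1..N. (real N - real k) * (f (real k) * f (- real k)))"
    by (simp only: trace_sq_Toeplitz)
  moreover have "f (real k) * f (- real k) = (sin (real k * \<theta>))\<^sup>2 / (real k)\<^sup>2" if "1 \<le> k" for k
    using that by (simp add: f_def power2_eq_square)
  moreover have "f 0 = \<theta>" by (simp add: f_def)
  ultimately show ?thesis by simp
qed

lemma trace_sq_A_entry_tendsto:
  assumes "0 \<le> \<theta>" "\<theta> \<le> pi / 2"
  shows "(\<lambda>N. trace_sq (A_entry \<theta>) N / real N) \<longlonglongrightarrow> - (pi\<^sup>2 / 3 + \<theta>\<^sup>2 - pi * \<theta>)"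
proof -
  have "(\<lambda>N. (\<Sum>k=1..N. (real N - real k) * ((cos (real k * \<theta>))\<^sup>2 / (real k)\<^sup>2)) / real N)
      \<longlonglongrightarrow> pi\<^sup>2 / 6 - pi * \<theta> / 2 + \<theta>\<^sup>2 / 2"
    using cos_sq_over_square_sums[OF assms]
    by (rule weighted_mean_tendsto_of_square_decay[where c = 1])
      (simp add: divide_right_mono abs_square_le_1)
  then have "(\<lambda>N. - 2 * ((\<Sum>k=1..N. (real N - real k) * ((cos (real k * \<theta>))\<^sup>2 / (real k)\<^sup>2)) / real N))
      \<longlonglongrightarrow> - 2 * (pi\<^sup>2 / 6 - pi * \<theta> / 2 + \<theta>\<^sup>2 / 2)"
    by (rule tendsto_mult_left)
  moreover have "- 2 * ((\<Sum>k=1..N. (real N - real k) * ((cos (real k * \<theta>))\<^sup>2 / (real k)\<^sup>2)) / real N)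
      = trace_sq (A_entry \<theta>) N / real N" for N
    by (simp add: trace_sq_A_entry)
  moreover have "- 2 * (pi\<^sup>2 / 6 - pi * \<theta> / 2 + \<theta>\<^sup>2 / 2) = - (pi\<^sup>2 / 3 + \<theta>\<^sup>2 - pi * \<theta>)"
    by (simp add: field_simps)
  ultimately show ?thesis by (simp only:)
qed

lemma trace_sq_B_entry_tendsto:
  assumes "0 \<le> \<theta>" "\<theta> \<le> pi / 2"
  shows "(\<lambda>N. trace_sq (B_entry \<theta>) N / real N) \<longlonglongrightarrow> pi * \<theta>"
proof -
  have "(\<lambda>N. (\<Sum>k=1..N. (real N - real k) * ((sin (real k * \<theta>))\<^sup>2 / (real k)\<^sup>2)) / real N)
      \<longlonglongrightarrow> pi * \<theta> / 2 - \<theta>\<^sup>2 / 2"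
    using sin_sq_over_square_sums[OF assms]
    by (rule weighted_mean_tendsto_of_square_decay[where c = 1])
      (simp add: divide_right_mono abs_square_le_1)
  then have "(\<lambda>N. \<theta>\<^sup>2 + 2 * ((\<Sum>k=1..N. (real N - real k) * ((sin (real k * \<theta>))\<^sup>2 / (real k)\<^sup>2)) / real N))
      \<longlonglongrightarrow> \<theta>\<^sup>2 + 2 * (pi * \<theta> / 2 - \<theta>\<^sup>2 / 2)"
    by (intro tendsto_add tendsto_const tendsto_mult_left)
  moreover have "\<forall>\<^sub>F N in sequentially.
      \<theta>\<^sup>2 + 2 * ((\<Sum>k=1..N. (real N - real k) * ((sin (real k * \<theta>))\<^sup>2 / (real k)\<^sup>2)) / real N)
      = trace_sq (B_entry \<theta>) N / real N"
    by (intro eventually_sequentiallyI[of 1]) (simp add: trace_sq_B_entry add_divide_distrib)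
  ultimately have "(\<lambda>N. trace_sq (B_entry \<theta>) N / real N) \<longlonglongrightarrow> \<theta>\<^sup>2 + 2 * (pi * \<theta> / 2 - \<theta>\<^sup>2 / 2)"
    by (rule Lim_transform_eventually)
  then show ?thesis by (simp add: algebra_simps)
qed

theorem theorem3:
  fixes \<theta> :: real
  assumes "0 \<le> \<theta>" and "\<theta> \<le> pi / 2"
  shows "((\<lambda>N. trace_sq (A_entry \<theta>) N / real N)
           \<longlonglongrightarrow> - (pi\<^sup>2 / 3 + \<theta>\<^sup>2 - pi * \<theta>)) \<and>
         ((\<lambda>N. trace_sq (B_entry \<theta>) N / real N) \<longlonglongrightarrow> pi * \<theta>)"
  using trace_sq_A_entry_tendsto[OF assms] trace_sq_B_entry_tendsto[OF assms] by blast

end
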